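(* (1) Let $(\mathcal T,(N_B,R_B),(N_A,R_A),\mathbb D,\zeta)$ be an object of $\overline{\mathrm{RArr}}(\mathcal B,\mathcal A)$, i.e. $\mathbb D=(D,\Delta,\varepsilon)$ is a comonad on $\mathcal B$ and $(R_B,\zeta)$ is a comonad arrow from $\mathbb D$ to $N_AR_A$ such that $\bar\zeta:=(\epsilon^BN_AR_AN_B)\circ(N_B\zeta N_B)\circ(N_BD\eta^B):N_BD\to N_AR_AN_B$ is invertible. Then $(\mathcal T,(N_A,R_A),(N_B,R_B),\tau)$ is a pre-torsor, where $\tau=(R_AN_BR_B\bar\zeta)\circ(R_AN_B\eta^BD)\circ(R_A\bar\zeta^{-1})\circ(\eta^AR_AN_B)$. (2) If $(F,t)$ is a morphism in $\overline{\mathrm{RArr}}(\mathcal B,\mathcal A)$ between two such objects, then $F$ is a morphism between the corresponding pre-torsors of (1).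
   Context: Conventions: $\circ$ vertical composition, juxtaposition horizontal composition; a functor's name denotes its identity transformation. Adjunctions $(N_A:\mathcal A\to\mathcal T,R_A)$, $(N_B:\mathcal B\to\mathcal T,R_B)$ with units $\eta^A,\eta^B$, counits $\epsilon^A,\epsilon^B$; $N_AR_A$ is a comonad with comultiplication $N_A\eta^AR_A$ and counit $\epsilon^A$. A comonad arrow $(R_B,\zeta)$ from $\mathbb D$ to $N_AR_A$ means $\zeta:DR_B\to R_BN_AR_A$ with $(R_B\epsilon^A)\circ\zeta=\varepsilon R_B$, $(R_BN_A\eta^AR_A)\circ\zeta=(\zeta N_AR_A)\circ(D\zeta)\circ(\Delta R_B)$. Pre-torsor: $\tau:R_AN_B\to R_AN_BR_BN_AR_AN_B$ with $(R_AN_BR_B\epsilon^AN_B)\circ\tau=R_AN_B\eta^B$, $(R_A\epsilon^BN_AR_AN_B)\circ\tau=\eta^AR_AN_B$, $(R_AN_BR_BN_A\tau)\circ\tau=(\tau R_BN_AR_AN_B)\circ\tau$. For $F:\mathcal T'\to\mathcal T$ with $R_AF=R'_A$, $R_BF=R'_B$ put $a=(\epsilon^AFN'_A)\circ(N_A\eta'^A)$, $b=(\epsilon^BFN'_B)\circ(N_B\eta'^B)$. A pre-torsor morphism is such $F$ with $(R_AbR_BaR_Ab)\circ\tau=\tau'\circ(R_Ab)$. A morphism in $\overline{\mathrm{RArr}}(\mathcal B,\mathcal A)$ is $(F,t)$ with $F$ such a functor and $t:\mathbb D\to\mathbb D'$ a comonad morphism with $(R_BaR'_A)\circ(\zeta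 F)=\zeta'\circ(tR'_B)$. *)

theory Defs
  imports Main
begin

record ('o,'a) cat =
  cobj :: "'o set"
  carr :: "'a set"
  cdom :: "'a \<Rightarrow> 'o"
  ccod :: "'a \<Rightarrow> 'o"
  ccomp :: "'a \<Rightarrow> 'a \<Rightarrow> 'a"   (* ccomp C g f = g o f *)
  cid :: "'o \<Rightarrow> 'a"

definition hom :: "('o,'a) cat \<Rightarrow> 'o \<Rightarrow> 'o \<Rightarrow> 'a set" where
  "hom C x y = {f \<in> carr C. cdom C f = x \<and> ccod C f = y}"

definition is_category :: "('o,'a) cat \<Rightarrow> bool" where
  "is_category C \<longleftrightarrow>
     (\<forall>f\<in>carr C. cdom C f \<in> cobj C \<and> ccod C f \<in> cobj C) \<and>
     (\<forall>x\<in>cobj C. cid C x \<in> hom C x x) \<and>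
     (\<forall>f\<in>carr C. \<forall>g\<in>carr C. ccod C f = cdom C g \<longrightarrow>
         ccomp C g f \<in> hom C (cdom C f) (ccod C g)) \<and>
     (\<forall>f\<in>carr C. ccomp C (cid C (ccod C f)) f = f \<and> ccomp C f (cid C (cdom C f)) = f) \<and>
     (\<forall>f\<in>carr C. \<forall>g\<in>carr C. \<forall>h\<in>carr C. ccod C f = cdom C g \<longrightarrow> ccod C g = cdom C h \<longrightarrow>
         ccomp C h (ccomp C g f) = ccomp C (ccomp C h g) f)"

definition is_iso :: "('o,'a) cat \<Rightarrow> 'a \<Rightarrow> bool" where
  "is_iso C f \<longleftrightarrow> f \<in> carr C \<and>
     (\<exists>g\<in>hom C (ccod C f) (cdom C f).
        ccomp C g f = cid C (cdom C f) \<and> ccomp C f g = cid C (ccod C f))"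

definition inv_arr :: "('o,'a) cat \<Rightarrow> 'a \<Rightarrow> 'a" where
  "inv_arr C f = (THE g. g \<in> hom C (ccod C f) (cdom C f) \<and>
        ccomp C g f = cid C (cdom C f) \<and> ccomp C f g = cid C (ccod C f))"

record ('o1,'a1,'o2,'a2) ftor =
  fo :: "'o1 \<Rightarrow> 'o2"
  fa :: "'a1 \<Rightarrow> 'a2"

definition fcomp :: "('o2,'a2,'o3,'a3) ftor \<Rightarrow> ('o1,'a1,'o2,'a2) ftor \<Rightarrow> ('o1,'a1,'o3,'a3) ftor" where
  "fcomp G F = \<lparr>fo = fo G \<circ> fo F, fa = fa G \<circ> fa F\<rparr>"

definition fid :: "('o,'a,'o,'a) ftor" where
  "fid = \<lparr>fo = (\<lambda>x. x), fa = (\<lambda>f. f)\<rparr>"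

definition is_functor :: "('o1,'a1) cat \<Rightarrow> ('o2,'a2) cat \<Rightarrow> ('o1,'a1,'o2,'a2) ftor \<Rightarrow> bool" where
  "is_functor C D F \<longleftrightarrow> is_category C \<and> is_category D \<and>
     (\<forall>x\<in>cobj C. fo F x \<in> cobj D) \<and>
     (\<forall>f\<in>carr C. fa F f \<in> hom D (fo F (cdom C f)) (fo F (ccod C f))) \<and>
     (\<forall>x\<in>cobj C. fa F (cid C x) = cid D (fo F x)) \<and>
     (\<forall>f\<in>carr C. \<forall>g\<in>carr C. ccod C f = cdom C g \<longrightarrow>
         fa F (ccomp C g f) = ccomp D (fa F g) (fa F f))"

definition is_nt :: "('o1,'a1) cat \<Rightarrow> ('o2,'a2) cat \<Rightarrow> ('o1,'a1,'o2,'a2) ftor \<Rightarrow>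
     ('o1,'a1,'o2,'a2) ftor \<Rightarrow> ('o1 \<Rightarrow> 'a2) \<Rightarrow> bool" where
  "is_nt C D F G \<alpha> \<longleftrightarrow> is_functor C D F \<and> is_functor C D G \<and>
     (\<forall>x\<in>cobj C. \<alpha> x \<in> hom D (fo F x) (fo G x)) \<and>
     (\<forall>f\<in>carr C. ccomp D (\<alpha> (ccod C f)) (fa F f) = ccomp D (fa G f) (\<alpha> (cdom C f)))"

definition is_adj :: "('oa,'aa) cat \<Rightarrow> ('ot,'at) cat \<Rightarrow> ('oa,'aa,'ot,'at) ftor \<Rightarrow>
     ('ot,'at,'oa,'aa) ftor \<Rightarrow> ('oa \<Rightarrow> 'aa) \<Rightarrow> ('ot \<Rightarrow> 'at) \<Rightarrow> bool" where
  "is_adj A T N R eta eps \<longleftrightarrow>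
     is_functor A T N \<and> is_functor T A R \<and>
     is_nt A A fid (fcomp R N) eta \<and> is_nt T T (fcomp N R) fid eps \<and>
     (\<forall>x\<in>cobj A. ccomp T (eps (fo N x)) (fa N (eta x)) = cid T (fo N x)) \<and>
     (\<forall>y\<in>cobj T. ccomp A (fa R (eps y)) (eta (fo R y)) = cid A (fo R y))"

definition is_comonad :: "('o,'a) cat \<Rightarrow> ('o,'a,'o,'a) ftor \<Rightarrow> ('o \<Rightarrow> 'a) \<Rightarrow> ('o \<Rightarrow> 'a) \<Rightarrow> bool" where
  "is_comonad B D Delta eps \<longleftrightarrow>
     is_functor B B D \<and> is_nt B B D (fcomp D D) Delta \<and> is_nt B B D fid eps \<and>
     (\<forall>x\<in>cobj B. ccomp B (eps (fo D x)) (Delta x) = cid B (fo D x)) \<and>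
     (\<forall>x\<in>cobj B. ccomp B (fa D (eps x)) (Delta x) = cid B (fo D x)) \<and>
     (\<forall>x\<in>cobj B. ccomp B (fa D (Delta x)) (Delta x) = ccomp B (Delta (fo D x)) (Delta x))"

definition is_comonad_mor :: "('o,'a) cat \<Rightarrow> ('o,'a,'o,'a) ftor \<Rightarrow> ('o \<Rightarrow> 'a) \<Rightarrow> ('o \<Rightarrow> 'a) \<Rightarrow>
     ('o,'a,'o,'a) ftor \<Rightarrow> ('o \<Rightarrow> 'a) \<Rightarrow> ('o \<Rightarrow> 'a) \<Rightarrow> ('o \<Rightarrow> 'a) \<Rightarrow> bool" where
  "is_comonad_mor B D Delta eps D' Delta' eps' t \<longleftrightarrow>
     is_nt B B D D' t \<and>
     (\<forall>x\<in>cobj B. ccomp B (eps' x) (t x) = eps x) \<and>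
     (\<forall>x\<in>cobj B. ccomp B (Delta' x) (t x) =
        ccomp B (ccomp B (t (fo D' x)) (fa D (t x))) (Delta x))"

record ('oa,'aa,'ob,'ab,'ot,'at) adjdata =
  rT :: "('ot,'at) cat"
  rNA :: "('oa,'aa,'ot,'at) ftor"
  rRA :: "('ot,'at,'oa,'aa) ftor"
  rEtaA :: "'oa \<Rightarrow> 'aa"
  rEpsA :: "'ot \<Rightarrow> 'at"
  rNB :: "('ob,'ab,'ot,'at) ftor"
  rRB :: "('ot,'at,'ob,'ab) ftor"
  rEtaB :: "'ob \<Rightarrow> 'ab"
  rEpsB :: "'ot \<Rightarrow> 'at"

record ('oa,'aa,'ob,'ab,'ot,'at) rarr = "('oa,'aa,'ob,'ab,'ot,'at) adjdata" +
  rD :: "('ob,'ab,'ob,'ab) ftor"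
  rDelta :: "'ob \<Rightarrow> 'ab"
  rEps :: "'ob \<Rightarrow> 'ab"
  rZeta :: "'ot \<Rightarrow> 'ab"

definition pre_torsor :: "('oa,'aa) cat \<Rightarrow> ('ob,'ab) cat \<Rightarrow>
     ('oa,'aa,'ob,'ab,'ot,'at,'z) adjdata_scheme \<Rightarrow> ('ob \<Rightarrow> 'aa) \<Rightarrow> bool" where
  "pre_torsor A B P tau \<longleftrightarrow>
     (let T = rT P; NA = rNA P; RA = rRA P; NB = rNB P; RB = rRB P in
     is_adj A T NA RA (rEtaA P) (rEpsA P) \<and>
     is_adj B T NB RB (rEtaB P) (rEpsB P) \<and>
     is_nt B A (fcomp RA NB) (fcomp RA (fcomp NB (fcomp RB (fcomp NA (fcomp RA NB))))) tau \<and>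
     (\<forall>b\<in>cobj B.
        ccomp A (fa RA (fa NB (fa RB (rEpsA P (fo NB b))))) (tau b) = fa RA (fa NB (rEtaB P b)) \<and>
        ccomp A (fa RA (rEpsB P (fo NA (fo RA (fo NB b))))) (tau b) = rEtaA P (fo RA (fo NB b)) \<and>
        ccomp A (fa RA (fa NB (fa RB (fa NA (tau b))))) (tau b) =
          ccomp A (tau (fo RB (fo NA (fo RA (fo NB b))))) (tau b)))"

definition zbar :: "('oa,'aa,'ob,'ab,'ot,'at,'z) rarr_scheme \<Rightarrow> 'ob \<Rightarrow> 'at" where
  "zbar X b = ccomp (rT X) (rEpsB X (fo (rNA X) (fo (rRA X) (fo (rNB X) b))))
      (ccomp (rT X) (fa (rNB X) (rZeta X (fo (rNB X) b)))
                    (fa (rNB X) (fa (rD X) (rEtaB X b))))"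

definition tau_of :: "('oa,'aa) cat \<Rightarrow> ('oa,'aa,'ob,'ab,'ot,'at,'z) rarr_scheme \<Rightarrow> 'ob \<Rightarrow> 'aa" where
  "tau_of A X b =
     (let T = rT X; RA = rRA X; NB = rNB X; RB = rRB X in
      ccomp A (fa RA (fa NB (fa RB (zbar X b))))
       (ccomp A (fa RA (fa NB (rEtaB X (fo (rD X) b))))
         (ccomp A (fa RA (inv_arr T (zbar X b)))
                  (rEtaA X (fo RA (fo NB b))))))"

definition comonad_arrow :: "('oa,'aa) cat \<Rightarrow> ('ob,'ab) cat \<Rightarrow>
     ('oa,'aa,'ob,'ab,'ot,'at,'z) rarr_scheme \<Rightarrow> bool" where
  "comonad_arrow A B X \<longleftrightarrow>
     (let T = rT X; NA = rNA X; RA = rRA X; RB = rRB X; D = rD X; zeta = rZeta X in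
      is_nt T B (fcomp D RB) (fcomp RB (fcomp NA RA)) zeta \<and>
      (\<forall>y\<in>cobj T. ccomp B (fa RB (rEpsA X y)) (zeta y) = rEps X (fo RB y)) \<and>
      (\<forall>y\<in>cobj T. ccomp B (fa RB (fa NA (rEtaA X (fo RA y)))) (zeta y) =
          ccomp B (zeta (fo NA (fo RA y))) (ccomp B (fa D (zeta y)) (rDelta X (fo RB y)))))"

definition rarr_obj :: "('oa,'aa) cat \<Rightarrow> ('ob,'ab) cat \<Rightarrow>
     ('oa,'aa,'ob,'ab,'ot,'at,'z) rarr_scheme \<Rightarrow> bool" where
  "rarr_obj A B X \<longleftrightarrow>
     is_adj A (rT X) (rNA X) (rRA X) (rEtaA X) (rEpsA X) \<and>
     is_adj B (rT X) (rNB X) (rRB X) (rEtaB X) (rEpsB X) \<and>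
     is_comonad B (rD X) (rDelta X) (rEps X) \<and>
     comonad_arrow A B X \<and>
     (\<forall>b\<in>cobj B. is_iso (rT X) (zbar X b))"

definition a_of :: "('oa,'aa,'ob,'ab,'ot,'at,'z) adjdata_scheme \<Rightarrow>
     ('oa,'aa,'ob,'ab,'ot2,'at2,'z2) adjdata_scheme \<Rightarrow> ('ot2,'at2,'ot,'at) ftor \<Rightarrow> 'oa \<Rightarrow> 'at" where
  "a_of P P' F x = ccomp (rT P) (rEpsA P (fo F (fo (rNA P') x))) (fa (rNA P) (rEtaA P' x))"

definition b_of :: "('oa,'aa,'ob,'ab,'ot,'at,'z) adjdata_scheme \<Rightarrow>
     ('oa,'aa,'ob,'ab,'ot2,'at2,'z2) adjdata_scheme \<Rightarrow> ('ot2,'at2,'ot,'at) ftor \<Rightarrow> 'ob \<Rightarrow> 'at" where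
  "b_of P P' F x = ccomp (rT P) (rEpsB P (fo F (fo (rNB P') x))) (fa (rNB P) (rEtaB P' x))"

definition compatible_functor :: "('oa,'aa,'ob,'ab,'ot,'at,'z) adjdata_scheme \<Rightarrow>
     ('oa,'aa,'ob,'ab,'ot2,'at2,'z2) adjdata_scheme \<Rightarrow> ('ot2,'at2,'ot,'at) ftor \<Rightarrow> bool" where
  "compatible_functor P P' F \<longleftrightarrow>
     is_functor (rT P') (rT P) F \<and>
     (\<forall>y\<in>cobj (rT P'). fo (rRA P) (fo F y) = fo (rRA P') y \<and> fo (rRB P) (fo F y) = fo (rRB P') y) \<and>
     (\<forall>f\<in>carr (rT P'). fa (rRA P) (fa F f) = fa (rRA P') f \<and> fa (rRB P) (fa F f) = fa (rRB P') f)"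

text \<open>Pre-torsor morphism: (R_A b R_B a R_A b) o tau = tau' o (R_A b); the horizontal
  composite is written componentwise.\<close>
definition pretorsor_mor :: "('oa,'aa) cat \<Rightarrow> ('ob,'ab) cat \<Rightarrow>
     ('oa,'aa,'ob,'ab,'ot,'at,'z) adjdata_scheme \<Rightarrow> ('ob \<Rightarrow> 'aa) \<Rightarrow>
     ('oa,'aa,'ob,'ab,'ot2,'at2,'z2) adjdata_scheme \<Rightarrow> ('ob \<Rightarrow> 'aa) \<Rightarrow>
     ('ot2,'at2,'ot,'at) ftor \<Rightarrow> bool" where
  "pretorsor_mor A B P tau P' tau' F \<longleftrightarrow>
     compatible_functor P P' F \<and>
     (let RA = rRA P; NB = rNB P; RB = rRB P; NA = rNA P;
          RA' = rRA P'; NB' = rNB P'; RB' = rRB P'; NA' = rNA P';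
          a = a_of P P' F; b = b_of P P' F in
      \<forall>x\<in>cobj B.
        ccomp A
          (ccomp A (fa RA (b (fo RB' (fo NA' (fo RA' (fo NB' x))))))
            (ccomp A (fa RA (fa NB (fa RB (a (fo RA' (fo NB' x))))))
                     (fa RA (fa NB (fa RB (fa NA (fa RA (b x))))))))
          (tau x)
        = ccomp A (tau' x) (fa RA (b x)))"

definition rarr_mor :: "('oa,'aa) cat \<Rightarrow> ('ob,'ab) cat \<Rightarrow>
     ('oa,'aa,'ob,'ab,'ot,'at,'z) rarr_scheme \<Rightarrow> ('oa,'aa,'ob,'ab,'ot2,'at2,'z2) rarr_scheme \<Rightarrow>
     ('ot2,'at2,'ot,'at) ftor \<Rightarrow> ('ob \<Rightarrow> 'ab) \<Rightarrow> bool" where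
  "rarr_mor A B X X' F t \<longleftrightarrow>
     rarr_obj A B X \<and> rarr_obj A B X' \<and>
     compatible_functor X X' F \<and>
     is_comonad_mor B (rD X) (rDelta X) (rEps X) (rD X') (rDelta X') (rEps X') t \<and>
     (\<forall>y\<in>cobj (rT X').
        ccomp B (fa (rRB X) (a_of X X' F (fo (rRA X') y))) (rZeta X (fo F y))
        = ccomp B (rZeta X' y) (t (fo (rRB X') y)))"

end

theory Submission
  imports Defs
begin

text \<open>
  The comonad-arrow axioms for \<open>\<zeta>\<close> translate into the statements that \<open>\<zeta>\<^sup>\<flat>\<close> is natural
  and compatible with the counits and comultiplications of \<open>\<D>\<close> and \<open>N\<^sub>AR\<^sub>A\<close>.
  The map \<open>\<tau>\<close> is the adjoint transpose (along \<open>N\<^sub>A \<turnstile> R\<^sub>A\<close>) of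
  \<open>\<tau>\<^sup>\<sharp> = (N\<^sub>BR\<^sub>B\<zeta>\<^sup>\<flat>)\<circ>(N\<^sub>B\<eta>\<^sup>BD)\<circ>(\<zeta>\<^sup>\<flat>)\<^sup>-\<^sup>1 : N\<^sub>AR\<^sub>AN\<^sub>B \<rightarrow> N\<^sub>BR\<^sub>BN\<^sub>AR\<^sub>AN\<^sub>B\<close>; the two counit
  axioms of a pre-torsor follow from the counit compatibility of \<open>\<zeta>\<^sup>\<flat>\<close> and the triangle
  identities, and the coassociativity axiom reduces to an identity between two maps out of
  \<open>N\<^sub>AR\<^sub>AN\<^sub>B\<close>, which we verify after precomposing with the isomorphism \<open>\<zeta>\<^sup>\<flat>\<close>.
  For a morphism \<open>(F,t)\<close> the comparison maps \<open>a\<close>, \<open>b\<close> are the mates of identities; the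
  pre-torsor-morphism equation is again the transpose of an identity in \<open>\<T>\<close>, which is
  checked after precomposition with \<open>\<zeta>\<^sup>\<flat>\<close>, using the compatibility of \<open>t\<close> with \<open>\<zeta>,\<zeta>'\<close>.
\<close>

lemma fcomp_simps [simp]: "fo (fcomp G F) x = fo G (fo F x)" "fa (fcomp G F) f = fa G (fa F f)"
  by (simp_all add: fcomp_def)

lemma fid_simps [simp]: "fo fid x = x" "fa fid f = f"
  by (simp_all add: fid_def)

lemma functor_comp: "is_functor C D F \<Longrightarrow> is_functor D E G \<Longrightarrow> is_functor C E (fcomp G F)"
  unfolding is_functor_def hom_def by auto

locale category =
  fixes C :: "('o,'a) cat"
  assumes cat: "is_category C"
begin

lemma dom_obj [simp]: "f \<in> carr C \<Longrightarrow> cdom C f \<in> cobj C"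
  using cat by (auto simp: is_category_def)
lemma cod_obj [simp]: "f \<in> carr C \<Longrightarrow> ccod C f \<in> cobj C"
  using cat by (auto simp: is_category_def)
lemma id_arr [simp]: "x \<in> cobj C \<Longrightarrow> cid C x \<in> carr C"
  using cat by (auto simp: is_category_def hom_def)
lemma dom_id [simp]: "x \<in> cobj C \<Longrightarrow> cdom C (cid C x) = x"
  using cat by (auto simp: is_category_def hom_def)
lemma cod_id [simp]: "x \<in> cobj C \<Longrightarrow> ccod C (cid C x) = x"
  using cat by (auto simp: is_category_def hom_def)
lemma comp_arr [simp]:
  "f \<in> carr C \<Longrightarrow> g \<in> carr C \<Longrightarrow> ccod C f = cdom C g \<Longrightarrow> ccomp C g f \<in> carr C"
  using cat unfolding is_category_def hom_def by blast
lemma dom_comp [simp]: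
  "f \<in> carr C \<Longrightarrow> g \<in> carr C \<Longrightarrow> ccod C f = cdom C g \<Longrightarrow> cdom C (ccomp C g f) = cdom C f"
  using cat unfolding is_category_def hom_def by blast
lemma cod_comp [simp]:
  "f \<in> carr C \<Longrightarrow> g \<in> carr C \<Longrightarrow> ccod C f = cdom C g \<Longrightarrow> ccod C (ccomp C g f) = ccod C g"
  using cat unfolding is_category_def hom_def by blast
lemma id_left [simp]: "f \<in> carr C \<Longrightarrow> ccod C f = x \<Longrightarrow> ccomp C (cid C x) f = f"
  using cat unfolding is_category_def by blast
lemma id_right [simp]: "f \<in> carr C \<Longrightarrow> cdom C f = x \<Longrightarrow> ccomp C f (cid C x) = f"
  using cat unfolding is_category_def by blast
lemma assoc [simp]:
  "f \<in> carr C \<Longrightarrow> g \<in> carr C \<Longrightarrow> h \<in> carr C \<Longrightarrow> ccod C f = cdom C g \<Longrightarrow> ccod C g = cdom C h \<Longrightarrow>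
   ccomp C (ccomp C h g) f = ccomp C h (ccomp C g f)"
  using cat unfolding is_category_def by metis

lemma rewrite_in_chain:
  "ccomp C p q = r \<Longrightarrow> p \<in> carr C \<Longrightarrow> q \<in> carr C \<Longrightarrow> k \<in> carr C \<Longrightarrow>
   ccod C q = cdom C p \<Longrightarrow> ccod C k = cdom C q \<Longrightarrow> ccomp C p (ccomp C q k) = ccomp C r k"
  by (metis assoc)

lemma rewrite_in_chain3:
  "ccomp C p (ccomp C q r) = s \<Longrightarrow> p \<in> carr C \<Longrightarrow> q \<in> carr C \<Longrightarrow> r \<in> carr C \<Longrightarrow> k \<in> carr C \<Longrightarrow>
   ccod C q = cdom C p \<Longrightarrow> ccod C r = cdom C q \<Longrightarrow> ccod C k = cdom C r \<Longrightarrow>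
   ccomp C p (ccomp C q (ccomp C r k)) = ccomp C s k"
  by (metis assoc comp_arr cod_comp dom_comp)

lemma inverse_unique:
  assumes "f \<in> carr C" "g \<in> hom C (ccod C f) (cdom C f)" "ccomp C g f = cid C (cdom C f)"
    "g' \<in> hom C (ccod C f) (cdom C f)" "ccomp C f g' = cid C (ccod C f)"
  shows "g = g'"
proof -
  have g: "g \<in> carr C" "cdom C g = ccod C f" "ccod C g = cdom C f"
    and g': "g' \<in> carr C" "cdom C g' = ccod C f" "ccod C g' = cdom C f"
    using assms by (auto simp: hom_def)
  have "g = ccomp C g (cid C (ccod C f))" using g by (metis id_right)
  also have "\<dots> = ccomp C g (ccomp C f g')" using assms by simp
  also have "\<dots> = ccomp C (ccomp C g f) g'" using assms g g' by (metis assoc)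
  also have "\<dots> = g'" using assms g' by (metis id_left)
  finally show ?thesis .
qed

lemma inv_arr_props:
  assumes "is_iso C f"
  shows "inv_arr C f \<in> carr C" "cdom C (inv_arr C f) = ccod C f" "ccod C (inv_arr C f) = cdom C f"
    "ccomp C (inv_arr C f) f = cid C (cdom C f)" "ccomp C f (inv_arr C f) = cid C (ccod C f)"
proof -
  have f: "f \<in> carr C" using assms by (simp add: is_iso_def)
  obtain g where g: "g \<in> hom C (ccod C f) (cdom C f)"
      "ccomp C g f = cid C (cdom C f) \<and> ccomp C f g = cid C (ccod C f)"
    using assms by (auto simp: is_iso_def)
  have "inv_arr C f = g" unfolding inv_arr_def
    using g inverse_unique[OF f] by (intro the_equality) blast+
  then show "inv_arr C f \<in> carr C" "cdom C (inv_arr C f) = ccod C f" "ccod C (inv_arr C f) = cdom C f"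
    "ccomp C (inv_arr C f) f = cid C (cdom C f)" "ccomp C f (inv_arr C f) = cid C (ccod C f)"
    using g by (auto simp: hom_def)
qed

text \<open>Isomorphisms are epimorphisms: the coassociativity-type identities below are proved by
  comparing both sides after precomposition with an isomorphism.\<close>
lemma iso_cancel_right:
  assumes "is_iso C f" "ccomp C u f = ccomp C v f" "u \<in> carr C" "v \<in> carr C"
    "cdom C u = ccod C f" "cdom C v = ccod C f"
  shows "u = v"
proof -
  have f: "f \<in> carr C" using assms(1) by (simp add: is_iso_def)
  note inv = inv_arr_props[OF assms(1)]
  have "u = ccomp C (ccomp C u f) (inv_arr C f)" using inv assms f by (metis assoc id_right)
  also have "\<dots> = ccomp C (ccomp C v f) (inv_arr C f)" using assms(2) by simp
  also have "\<dots> = v" using inv assms f by (metis assoc id_right)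
  finally show ?thesis .
qed

end

locale cat_functor =
  fixes C :: "('o1,'a1) cat" and D :: "('o2,'a2) cat" and F
  assumes functor_ax: "is_functor C D F"
begin

sublocale C: category C using functor_ax by (simp add: is_functor_def category_def)
sublocale D: category D using functor_ax by (simp add: is_functor_def category_def)

lemma obj [simp]: "x \<in> cobj C \<Longrightarrow> fo F x \<in> cobj D"
  using functor_ax by (simp add: is_functor_def)
lemma arr [simp]: "f \<in> carr C \<Longrightarrow> fa F f \<in> carr D"
  using functor_ax by (simp add: is_functor_def hom_def)
lemma dom [simp]: "f \<in> carr C \<Longrightarrow> cdom D (fa F f) = fo F (cdom C f)"
  using functor_ax by (simp add: is_functor_def hom_def)
lemma cod [simp]: "f \<in> carr C \<Longrightarrow> ccod D (fa F f) = fo F (ccod C f)"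
  using functor_ax by (simp add: is_functor_def hom_def)
lemma preserves_id [simp]: "x \<in> cobj C \<Longrightarrow> fa F (cid C x) = cid D (fo F x)"
  using functor_ax by (simp add: is_functor_def)
lemma preserves_comp [simp]:
  "f \<in> carr C \<Longrightarrow> g \<in> carr C \<Longrightarrow> ccod C f = cdom C g \<Longrightarrow> fa F (ccomp C g f) = ccomp D (fa F g) (fa F f)"
  using functor_ax by (simp add: is_functor_def)

end

locale nat_trans =
  fixes C :: "('o1,'a1) cat" and D :: "('o2,'a2) cat" and F G \<alpha>
  assumes nt: "is_nt C D F G \<alpha>"
begin

sublocale F: cat_functor C D F using nt by (simp add: is_nt_def cat_functor_def)
sublocale G: cat_functor C D G using nt by (simp add: is_nt_def cat_functor_def)

lemma arr [simp]: "x \<in> cobj C \<Longrightarrow> \<alpha> x \<in> carr D"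
  using nt by (simp add: is_nt_def hom_def)
lemma dom [simp]: "x \<in> cobj C \<Longrightarrow> cdom D (\<alpha> x) = fo F x"
  using nt by (simp add: is_nt_def hom_def)
lemma cod [simp]: "x \<in> cobj C \<Longrightarrow> ccod D (\<alpha> x) = fo G x"
  using nt by (simp add: is_nt_def hom_def)
lemma nat: "f \<in> carr C \<Longrightarrow> ccomp D (\<alpha> (ccod C f)) (fa F f) = ccomp D (fa G f) (\<alpha> (cdom C f))"
  using nt by (simp add: is_nt_def)

end

locale comonad_arrow_data =
  fixes A :: "('oa,'aa) cat" and B :: "('ob,'ab) cat" and T :: "('ot,'at) cat"
    and NA RA etaA epsA NB RB etaB epsB D Delta eps zeta
  assumes adjA: "is_adj A T NA RA etaA epsA"
    and adjB: "is_adj B T NB RB etaB epsB"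
    and comonad: "is_comonad B D Delta eps"
    and zeta_nt: "is_nt T B (fcomp D RB) (fcomp RB (fcomp NA RA)) zeta"
    and zeta_counit: "\<And>y. y \<in> cobj T \<Longrightarrow> ccomp B (fa RB (epsA y)) (zeta y) = eps (fo RB y)"
    and zeta_comult: "\<And>y. y \<in> cobj T \<Longrightarrow> ccomp B (fa RB (fa NA (etaA (fo RA y)))) (zeta y) =
          ccomp B (zeta (fo NA (fo RA y))) (ccomp B (fa D (zeta y)) (Delta (fo RB y)))"
begin

abbreviation compT (infixr "\<cdot>" 55) where "g \<cdot> f \<equiv> ccomp T g f"
abbreviation compA (infixr "\<cdot>\<^sub>A" 55) where "g \<cdot>\<^sub>A f \<equiv> ccomp A g f"
abbreviation compB (infixr "\<cdot>\<^sub>B" 55) where "g \<cdot>\<^sub>B f \<equiv> ccomp B g f"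

sublocale T: category T using adjA by (simp add: is_adj_def is_functor_def category_def)
sublocale A: category A using adjA by (simp add: is_adj_def is_functor_def category_def)
sublocale B: category B using adjB by (simp add: is_adj_def is_functor_def category_def)
sublocale NA: cat_functor A T NA using adjA by (simp add: is_adj_def cat_functor_def)
sublocale RA: cat_functor T A RA using adjA by (simp add: is_adj_def cat_functor_def)
sublocale NB: cat_functor B T NB using adjB by (simp add: is_adj_def cat_functor_def)
sublocale RB: cat_functor T B RB using adjB by (simp add: is_adj_def cat_functor_def)
sublocale D: cat_functor B B D using comonad by (simp add: is_comonad_def cat_functor_def)
sublocale etaA: nat_trans A A fid "fcomp RA NA" etaA using adjA by (simp add: is_adj_def nat_trans_def)
sublocale epsA: nat_trans T T "fcomp NA RA" fid epsA using adjA by (simp add: is_adj_def nat_trans_def)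
sublocale etaB: nat_trans B B fid "fcomp RB NB" etaB using adjB by (simp add: is_adj_def nat_trans_def)
sublocale epsB: nat_trans T T "fcomp NB RB" fid epsB using adjB by (simp add: is_adj_def nat_trans_def)
sublocale Delta: nat_trans B B D "fcomp D D" Delta using comonad by (simp add: is_comonad_def nat_trans_def)
sublocale eps: nat_trans B B D fid eps using comonad by (simp add: is_comonad_def nat_trans_def)
sublocale zeta: nat_trans T B "fcomp D RB" "fcomp RB (fcomp NA RA)" zeta
  using zeta_nt by (simp add: nat_trans_def)

lemma triangleA: "y \<in> cobj T \<Longrightarrow> fa RA (epsA y) \<cdot>\<^sub>A etaA (fo RA y) = cid A (fo RA y)"
  using adjA by (simp add: is_adj_def)
lemma triangleB_left: "x \<in> cobj B \<Longrightarrow> epsB (fo NB x) \<cdot> fa NB (etaB x) = cid T (fo NB x)"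
  using adjB by (simp add: is_adj_def)
lemma triangleB_right: "y \<in> cobj T \<Longrightarrow> fa RB (epsB y) \<cdot>\<^sub>B etaB (fo RB y) = cid B (fo RB y)"
  using adjB by (simp add: is_adj_def)

text \<open>The mate \<open>\<zeta>\<^sup>\<flat> : N\<^sub>BD \<rightarrow> N\<^sub>AR\<^sub>AN\<^sub>B\<close> of \<open>\<zeta>\<close> (called \<open>zbar\<close> in the definitions).\<close>
definition zeta_flat :: "'ob \<Rightarrow> 'at" where
  "zeta_flat b = epsB (fo NA (fo RA (fo NB b))) \<cdot> (fa NB (zeta (fo NB b)) \<cdot> fa NB (fa D (etaB b)))"

lemma zeta_flat_type [simp]:
  assumes "b \<in> cobj B"
  shows "zeta_flat b \<in> carr T" "cdom T (zeta_flat b) = fo NB (fo D b)"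
    "ccod T (zeta_flat b) = fo NA (fo RA (fo NB b))"
  using assms by (simp_all add: zeta_flat_def)

lemma zeta_flat_nat:
  assumes f: "f \<in> carr B"
  shows "zeta_flat (ccod B f) \<cdot> fa NB (fa D f) = fa NA (fa RA (fa NB f)) \<cdot> zeta_flat (cdom B f)"
proof -
  have n1: "fa NB (fa D (etaB (ccod B f))) \<cdot> fa NB (fa D f)
      = fa NB (fa D (fa RB (fa NB f))) \<cdot> fa NB (fa D (etaB (cdom B f)))"
    using arg_cong[OF etaB.nat[of f], of "\<lambda>h. fa NB (fa D h)"] f by simp
  have n2: "fa NB (zeta (fo NB (ccod B f))) \<cdot> fa NB (fa D (fa RB (fa NB f)))
      = fa NB (fa RB (fa NA (fa RA (fa NB f)))) \<cdot> fa NB (zeta (fo NB (cdom B f)))"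
    using arg_cong[OF zeta.nat[of "fa NB f"], of "fa NB"] f by simp
  have n3: "epsB (fo NA (fo RA (fo NB (ccod B f)))) \<cdot> fa NB (fa RB (fa NA (fa RA (fa NB f))))
      = fa NA (fa RA (fa NB f)) \<cdot> epsB (fo NA (fo RA (fo NB (cdom B f))))"
    using epsB.nat[of "fa NA (fa RA (fa NB f))"] f by simp
  show ?thesis using f unfolding zeta_flat_def
    by (simp add: n1 T.rewrite_in_chain[OF n1] n2 T.rewrite_in_chain[OF n2]
        n3 T.rewrite_in_chain[OF n3])
qed

lemma zeta_flat_counit:
  assumes b: "b \<in> cobj B"
  shows "epsA (fo NB b) \<cdot> zeta_flat b = fa NB (eps b)"
proof -
  have e1: "epsA (fo NB b) \<cdot> epsB (fo NA (fo RA (fo NB b)))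
      = epsB (fo NB b) \<cdot> fa NB (fa RB (epsA (fo NB b)))"
    using epsB.nat[of "epsA (fo NB b)"] b by simp
  have e2: "fa NB (fa RB (epsA (fo NB b))) \<cdot> fa NB (zeta (fo NB b)) = fa NB (eps (fo RB (fo NB b)))"
    using arg_cong[OF zeta_counit[of "fo NB b"], of "fa NB"] b by simp
  have e3: "fa NB (eps (fo RB (fo NB b))) \<cdot> fa NB (fa D (etaB b)) = fa NB (etaB b) \<cdot> fa NB (eps b)"
    using arg_cong[OF eps.nat[of "etaB b"], of "fa NB"] b by simp
  show ?thesis using b
    by (simp add: zeta_flat_def e1 T.rewrite_in_chain[OF e1] e2 T.rewrite_in_chain[OF e2]
        e3 T.rewrite_in_chain[OF e3] triangleB_left T.rewrite_in_chain[OF triangleB_left])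
qed

lemma zeta_flat_transpose:
  assumes b: "b \<in> cobj B"
  shows "fa RB (zeta_flat b) \<cdot>\<^sub>B etaB (fo D b) = zeta (fo NB b) \<cdot>\<^sub>B fa D (etaB b)"
proof -
  have h1: "fa RB (fa NB (fa D (etaB b))) \<cdot>\<^sub>B etaB (fo D b)
      = etaB (fo D (fo RB (fo NB b))) \<cdot>\<^sub>B fa D (etaB b)"
    using etaB.nat[of "fa D (etaB b)"] b by simp
  have h2: "fa RB (fa NB (zeta (fo NB b))) \<cdot>\<^sub>B etaB (fo D (fo RB (fo NB b)))
      = etaB (fo RB (fo NA (fo RA (fo NB b)))) \<cdot>\<^sub>B zeta (fo NB b)"
    using etaB.nat[of "zeta (fo NB b)"] b by simp
  show ?thesis using b
    by (simp add: zeta_flat_def h1 B.rewrite_in_chain[OF h1] h2 B.rewrite_in_chain[OF h2]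
        triangleB_right B.rewrite_in_chain[OF triangleB_right])
qed

lemma zeta_flat_comult:
  assumes b: "b \<in> cobj B"
  shows "fa NA (etaA (fo RA (fo NB b))) \<cdot> zeta_flat b
       = fa NA (fa RA (zeta_flat b)) \<cdot> (zeta_flat (fo D b) \<cdot> fa NB (Delta b))"
proof -
  have f1: "fa NA (etaA (fo RA (fo NB b))) \<cdot> epsB (fo NA (fo RA (fo NB b)))
      = epsB (fo NA (fo RA (fo NA (fo RA (fo NB b))))) \<cdot> fa NB (fa RB (fa NA (etaA (fo RA (fo NB b)))))"
    using epsB.nat[of "fa NA (etaA (fo RA (fo NB b)))"] b by simp
  have f2: "fa NB (fa RB (fa NA (etaA (fo RA (fo NB b))))) \<cdot> fa NB (zeta (fo NB b))
      = fa NB (zeta (fo NA (fo RA (fo NB b)))) \<cdot>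
          (fa NB (fa D (zeta (fo NB b))) \<cdot> fa NB (Delta (fo RB (fo NB b))))"
    using arg_cong[OF zeta_comult[of "fo NB b"], of "fa NB"] b by simp
  have f3: "fa NB (Delta (fo RB (fo NB b))) \<cdot> fa NB (fa D (etaB b))
      = fa NB (fa D (fa D (etaB b))) \<cdot> fa NB (Delta b)"
    using arg_cong[OF Delta.nat[of "etaB b"], of "fa NB"] b by simp
  have g1: "fa NA (fa RA (zeta_flat b)) \<cdot> epsB (fo NA (fo RA (fo NB (fo D b))))
      = epsB (fo NA (fo RA (fo NA (fo RA (fo NB b))))) \<cdot> fa NB (fa RB (fa NA (fa RA (zeta_flat b))))"
    using epsB.nat[of "fa NA (fa RA (zeta_flat b))"] b by simp
  have g2: "fa NB (fa RB (fa NA (fa RA (zeta_flat b)))) \<cdot> fa NB (zeta (fo NB (fo D b)))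
      = fa NB (zeta (fo NA (fo RA (fo NB b)))) \<cdot> fa NB (fa D (fa RB (zeta_flat b)))"
    using arg_cong[OF zeta.nat[of "zeta_flat b"], of "fa NB"] b by simp
  have g3: "fa NB (fa D (fa RB (zeta_flat b))) \<cdot> fa NB (fa D (etaB (fo D b)))
      = fa NB (fa D (zeta (fo NB b))) \<cdot> fa NB (fa D (fa D (etaB b)))"
    using arg_cong[OF zeta_flat_transpose[OF b], of "\<lambda>h. fa NB (fa D h)"] b by simp
  have "fa NA (etaA (fo RA (fo NB b))) \<cdot> zeta_flat b
      = epsB (fo NA (fo RA (fo NA (fo RA (fo NB b))))) \<cdot> (fa NB (zeta (fo NA (fo RA (fo NB b)))) \<cdot>
          (fa NB (fa D (zeta (fo NB b))) \<cdot> (fa NB (fa D (fa D (etaB b))) \<cdot> fa NB (Delta b))))"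
    using b unfolding zeta_flat_def
    by (simp add: f1 T.rewrite_in_chain[OF f1] f2 T.rewrite_in_chain[OF f2]
        f3 T.rewrite_in_chain[OF f3])
  also have "\<dots> = fa NA (fa RA (zeta_flat b)) \<cdot> (zeta_flat (fo D b) \<cdot> fa NB (Delta b))"
    using b unfolding zeta_flat_def[of "fo D b"]
    by (simp add: g1 T.rewrite_in_chain[OF g1] g2 T.rewrite_in_chain[OF g2]
        g3 T.rewrite_in_chain[OF g3])
  finally show ?thesis .
qed

end

locale rarr_object_data = comonad_arrow_data +
  assumes zeta_flat_iso: "\<And>b. b \<in> cobj B \<Longrightarrow> is_iso T (zeta_flat b)"
begin

definition zeta_flat_inv where
  "zeta_flat_inv b = inv_arr T (zeta_flat b)"

lemma zeta_flat_inv_type [simp]: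
  assumes "b \<in> cobj B"
  shows "zeta_flat_inv b \<in> carr T" "cdom T (zeta_flat_inv b) = fo NA (fo RA (fo NB b))"
    "ccod T (zeta_flat_inv b) = fo NB (fo D b)"
  using T.inv_arr_props[OF zeta_flat_iso[OF assms]] assms by (simp_all add: zeta_flat_inv_def)

lemma zeta_flat_inv_left: "b \<in> cobj B \<Longrightarrow> zeta_flat_inv b \<cdot> zeta_flat b = cid T (fo NB (fo D b))"
  using T.inv_arr_props[OF zeta_flat_iso] by (simp add: zeta_flat_inv_def)

lemma zeta_flat_inv_right:
  "b \<in> cobj B \<Longrightarrow> zeta_flat b \<cdot> zeta_flat_inv b = cid T (fo NA (fo RA (fo NB b)))"
  using T.inv_arr_props[OF zeta_flat_iso] by (simp add: zeta_flat_inv_def)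

lemma zeta_flat_inv_nat:
  assumes f: "f \<in> carr B"
  shows "zeta_flat_inv (ccod B f) \<cdot> fa NA (fa RA (fa NB f)) = fa NB (fa D f) \<cdot> zeta_flat_inv (cdom B f)"
proof -
  have "zeta_flat_inv (ccod B f) \<cdot> fa NA (fa RA (fa NB f))
      = zeta_flat_inv (ccod B f) \<cdot> (fa NA (fa RA (fa NB f)) \<cdot> (zeta_flat (cdom B f) \<cdot> zeta_flat_inv (cdom B f)))"
    using f by (simp add: zeta_flat_inv_right)
  also have "\<dots> = zeta_flat_inv (ccod B f) \<cdot> (zeta_flat (ccod B f) \<cdot> (fa NB (fa D f) \<cdot> zeta_flat_inv (cdom B f)))"
    using f by (simp add: T.rewrite_in_chain[OF zeta_flat_nat[OF f, symmetric]])
  also have "\<dots> = fa NB (fa D f) \<cdot> zeta_flat_inv (cdom B f)"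
    using f T.rewrite_in_chain[OF zeta_flat_inv_left] by simp
  finally show ?thesis .
qed

lemma counit_zeta_flat_inv:
  assumes b: "b \<in> cobj B"
  shows "fa NB (eps b) \<cdot> zeta_flat_inv b = epsA (fo NB b)"
proof -
  have "fa NB (eps b) \<cdot> zeta_flat_inv b = epsA (fo NB b) \<cdot> (zeta_flat b \<cdot> zeta_flat_inv b)"
    using b by (simp add: T.rewrite_in_chain[OF zeta_flat_counit[OF b]])
  also have "\<dots> = epsA (fo NB b)"
    using b by (simp add: zeta_flat_inv_right)
  finally show ?thesis .
qed

text \<open>The map \<open>\<tau>\<close> of the theorem, and the map \<open>\<tau>\<^sup>\<sharp>\<close> in \<open>\<T>\<close> with
  \<open>\<tau> = R\<^sub>A\<tau>\<^sup>\<sharp> \<circ> \<eta>\<^sup>AR\<^sub>AN\<^sub>B\<close>, i.e. \<open>\<tau>\<close> is the adjoint transpose of \<open>\<tau>\<^sup>\<sharp>\<close>.\<close>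
definition tau where
  "tau b = fa RA (fa NB (fa RB (zeta_flat b))) \<cdot>\<^sub>A (fa RA (fa NB (etaB (fo D b))) \<cdot>\<^sub>A
     (fa RA (zeta_flat_inv b) \<cdot>\<^sub>A etaA (fo RA (fo NB b))))"

definition tau_sharp where
  "tau_sharp b = fa NB (fa RB (zeta_flat b)) \<cdot> (fa NB (etaB (fo D b)) \<cdot> zeta_flat_inv b)"

lemma tau_type [simp]:
  assumes "b \<in> cobj B"
  shows "tau b \<in> carr A" "cdom A (tau b) = fo RA (fo NB b)"
    "ccod A (tau b) = fo RA (fo NB (fo RB (fo NA (fo RA (fo NB b)))))"
  using assms by (simp_all add: tau_def)

lemma tau_sharp_type [simp]:
  assumes "b \<in> cobj B"
  shows "tau_sharp b \<in> carr T" "cdom T (tau_sharp b) = fo NA (fo RA (fo NB b))"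
    "ccod T (tau_sharp b) = fo NB (fo RB (fo NA (fo RA (fo NB b))))"
  using assms by (simp_all add: tau_sharp_def)

lemma tau_nat:
  assumes f: "f \<in> carr B"
  shows "tau (ccod B f) \<cdot>\<^sub>A fa RA (fa NB f)
       = fa RA (fa NB (fa RB (fa NA (fa RA (fa NB f))))) \<cdot>\<^sub>A tau (cdom B f)"
proof -
  have m1: "etaA (fo RA (fo NB (ccod B f))) \<cdot>\<^sub>A fa RA (fa NB f)
      = fa RA (fa NA (fa RA (fa NB f))) \<cdot>\<^sub>A etaA (fo RA (fo NB (cdom B f)))"
    using etaA.nat[of "fa RA (fa NB f)"] f by simp
  have m2: "fa RA (zeta_flat_inv (ccod B f)) \<cdot>\<^sub>A fa RA (fa NA (fa RA (fa NB f)))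
      = fa RA (fa NB (fa D f)) \<cdot>\<^sub>A fa RA (zeta_flat_inv (cdom B f))"
    using arg_cong[OF zeta_flat_inv_nat[OF f], of "fa RA"] f by simp
  have m3: "fa RA (fa NB (etaB (fo D (ccod B f)))) \<cdot>\<^sub>A fa RA (fa NB (fa D f))
      = fa RA (fa NB (fa RB (fa NB (fa D f)))) \<cdot>\<^sub>A fa RA (fa NB (etaB (fo D (cdom B f))))"
    using arg_cong[OF etaB.nat[of "fa D f"], of "\<lambda>h. fa RA (fa NB h)"] f by simp
  have m4: "fa RA (fa NB (fa RB (zeta_flat (ccod B f)))) \<cdot>\<^sub>A fa RA (fa NB (fa RB (fa NB (fa D f))))
      = fa RA (fa NB (fa RB (fa NA (fa RA (fa NB f))))) \<cdot>\<^sub>A fa RA (fa NB (fa RB (zeta_flat (cdom B f))))"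
    using arg_cong[OF zeta_flat_nat[OF f], of "\<lambda>h. fa RA (fa NB (fa RB h))"] f by simp
  show ?thesis using f unfolding tau_def
    by (simp add: m1 A.rewrite_in_chain[OF m1] m2 A.rewrite_in_chain[OF m2]
        m3 A.rewrite_in_chain[OF m3] m4 A.rewrite_in_chain[OF m4])
qed

lemma tau_is_nt:
  "is_nt B A (fcomp RA NB) (fcomp RA (fcomp NB (fcomp RB (fcomp NA (fcomp RA NB))))) tau"
proof -
  have RANB: "is_functor B A (fcomp RA NB)"
    by (rule functor_comp[OF NB.functor_ax RA.functor_ax])
  have "is_functor B A (fcomp RA (fcomp NB (fcomp RB (fcomp NA (fcomp RA NB)))))"
    using RANB by (metis functor_comp NA.functor_ax NB.functor_ax RA.functor_ax RB.functor_ax)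
  with RANB show ?thesis
    unfolding is_nt_def using tau_nat by (simp add: hom_def)
qed

lemma tau_counit_A:
  assumes b: "b \<in> cobj B"
  shows "fa RA (fa NB (fa RB (epsA (fo NB b)))) \<cdot>\<^sub>A tau b = fa RA (fa NB (etaB b))"
proof -
  have a1: "fa RA (fa NB (fa RB (epsA (fo NB b)))) \<cdot>\<^sub>A fa RA (fa NB (fa RB (zeta_flat b)))
      = fa RA (fa NB (fa RB (fa NB (eps b))))"
    using arg_cong[OF zeta_flat_counit[OF b], of "\<lambda>h. fa RA (fa NB (fa RB h))"] b by simp
  have a2: "fa RA (fa NB (fa RB (fa NB (eps b)))) \<cdot>\<^sub>A fa RA (fa NB (etaB (fo D b)))
      = fa RA (fa NB (etaB b)) \<cdot>\<^sub>A fa RA (fa NB (eps b))"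
    using arg_cong[OF etaB.nat[of "eps b"], of "\<lambda>h. fa RA (fa NB h)"] b by simp
  have a3: "fa RA (fa NB (eps b)) \<cdot>\<^sub>A fa RA (zeta_flat_inv b) = fa RA (epsA (fo NB b))"
    using arg_cong[OF counit_zeta_flat_inv[OF b], of "fa RA"] b by simp
  show ?thesis using b unfolding tau_def
    by (simp add: a1 A.rewrite_in_chain[OF a1] a2 A.rewrite_in_chain[OF a2]
        a3 A.rewrite_in_chain[OF a3] triangleA A.rewrite_in_chain[OF triangleA])
qed

lemma tau_counit_B:
  assumes b: "b \<in> cobj B"
  shows "fa RA (epsB (fo NA (fo RA (fo NB b)))) \<cdot>\<^sub>A tau b = etaA (fo RA (fo NB b))"
proof -
  have a1: "fa RA (epsB (fo NA (fo RA (fo NB b)))) \<cdot>\<^sub>A fa RA (fa NB (fa RB (zeta_flat b)))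
      = fa RA (zeta_flat b) \<cdot>\<^sub>A fa RA (epsB (fo NB (fo D b)))"
    using arg_cong[OF epsB.nat[of "zeta_flat b"], of "fa RA"] b by simp
  have a2: "fa RA (epsB (fo NB (fo D b))) \<cdot>\<^sub>A fa RA (fa NB (etaB (fo D b))) = cid A (fo RA (fo NB (fo D b)))"
    using arg_cong[OF triangleB_left[of "fo D b"], of "fa RA"] b by simp
  have a3: "fa RA (zeta_flat b) \<cdot>\<^sub>A fa RA (zeta_flat_inv b) = cid A (fo RA (fo NA (fo RA (fo NB b))))"
    using arg_cong[OF zeta_flat_inv_right[OF b], of "fa RA"] b by simp
  show ?thesis using b unfolding tau_def
    by (simp add: a1 A.rewrite_in_chain[OF a1] a2 A.rewrite_in_chain[OF a2]
        a3 A.rewrite_in_chain[OF a3])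
qed

text \<open>The common value of both sides of the coassociativity of \<open>\<tau>\<^sup>\<sharp>\<close> after precomposition
  with \<open>\<zeta>\<^sup>\<flat>\<close>: \<open>N\<^sub>BR\<^sub>B(\<zeta>\<^sup>\<flat>R\<^sub>BN\<^sub>AR\<^sub>AN\<^sub>B) \<circ> N\<^sub>BR\<^sub>BN\<^sub>BDR\<^sub>B\<zeta>\<^sup>\<flat> \<circ> N\<^sub>BR\<^sub>BN\<^sub>BD\<eta>\<^sup>BD \<circ> N\<^sub>BR\<^sub>BN\<^sub>B\<Delta> \<circ> N\<^sub>B\<eta>\<^sup>BD\<close>.\<close>
definition tau_sharp_twice where
  "tau_sharp_twice b = fa NB (fa RB (zeta_flat (fo RB (fo NA (fo RA (fo NB b)))))) \<cdot>
      (fa NB (fa RB (fa NB (fa D (fa RB (zeta_flat b))))) \<cdot> (fa NB (fa RB (fa NB (fa D (etaB (fo D b)))))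
      \<cdot> (fa NB (fa RB (fa NB (Delta b))) \<cdot> fa NB (etaB (fo D b)))))"

text \<open>Left side of coassociativity: via the comultiplication compatibility of \<open>\<zeta>\<^sup>\<flat>\<close>.\<close>
lemma tau_sharp_coassoc_left:
  assumes b: "b \<in> cobj B"
  shows "(fa NB (fa RB (fa NA (fa RA (tau_sharp b)))) \<cdot>
      (fa NB (fa RB (fa NA (etaA (fo RA (fo NB b))))) \<cdot> tau_sharp b)) \<cdot> zeta_flat b = tau_sharp_twice b"
proof -
  have x1: "fa NB (fa RB (fa NA (etaA (fo RA (fo NB b))))) \<cdot> fa NB (fa RB (zeta_flat b))
      = fa NB (fa RB (fa NA (fa RA (zeta_flat b)))) \<cdot> (fa NB (fa RB (zeta_flat (fo D b))) \<cdot> fa NB (fa RB (fa NB (Delta b))))"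
    using arg_cong[OF zeta_flat_comult[OF b], of "\<lambda>h. fa NB (fa RB h)"] b by simp
  have x2: "fa NB (fa RB (fa NA (fa RA (zeta_flat_inv b)))) \<cdot> fa NB (fa RB (fa NA (fa RA (zeta_flat b))))
      = cid T (fo NB (fo RB (fo NA (fo RA (fo NB (fo D b))))))"
    using arg_cong[OF zeta_flat_inv_left[OF b], of "\<lambda>h. fa NB (fa RB (fa NA (fa RA h)))"] b by simp
  have x3: "fa NB (fa RB (fa NA (fa RA (fa NB (etaB (fo D b)))))) \<cdot> fa NB (fa RB (zeta_flat (fo D b)))
      = fa NB (fa RB (zeta_flat (fo RB (fo NB (fo D b))))) \<cdot> fa NB (fa RB (fa NB (fa D (etaB (fo D b)))))"
    using arg_cong[OF zeta_flat_nat[of "etaB (fo D b)"], of "\<lambda>h. fa NB (fa RB h)"] b by simp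
  have x4: "fa NB (fa RB (fa NA (fa RA (fa NB (fa RB (zeta_flat b)))))) \<cdot> fa NB (fa RB (zeta_flat (fo RB (fo NB (fo D b)))))
      = fa NB (fa RB (zeta_flat (fo RB (fo NA (fo RA (fo NB b)))))) \<cdot> fa NB (fa RB (fa NB (fa D (fa RB (zeta_flat b)))))"
    using arg_cong[OF zeta_flat_nat[of "fa RB (zeta_flat b)"], of "\<lambda>h. fa NB (fa RB h)"] b by simp
  show ?thesis using b unfolding tau_sharp_def tau_sharp_twice_def
    by (simp add: zeta_flat_inv_left x1 T.rewrite_in_chain[OF x1] x2 T.rewrite_in_chain[OF x2]
        x3 T.rewrite_in_chain[OF x3] x4 T.rewrite_in_chain[OF x4])
qed

text \<open>Right side of coassociativity: via naturality of \<open>\<zeta>\<^sup>\<flat>\<close> and of \<open>\<eta>\<^sup>B\<close>.\<close>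
lemma tau_sharp_coassoc_right:
  assumes b: "b \<in> cobj B"
  shows "(tau_sharp (fo RB (fo NA (fo RA (fo NB b)))) \<cdot>
      (fa NA (fa RA (tau_sharp b)) \<cdot> fa NA (etaA (fo RA (fo NB b))))) \<cdot> zeta_flat b = tau_sharp_twice b"
proof -
  have y1: "fa NA (fa RA (zeta_flat_inv b)) \<cdot> fa NA (fa RA (zeta_flat b)) = cid T (fo NA (fo RA (fo NB (fo D b))))"
    using arg_cong[OF zeta_flat_inv_left[OF b], of "\<lambda>h. fa NA (fa RA h)"] b by simp
  have y2: "fa NA (fa RA (fa NB (etaB (fo D b)))) \<cdot> zeta_flat (fo D b)
      = zeta_flat (fo RB (fo NB (fo D b))) \<cdot> fa NB (fa D (etaB (fo D b)))"
    using zeta_flat_nat[of "etaB (fo D b)"] b by simp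
  have y3: "fa NA (fa RA (fa NB (fa RB (zeta_flat b)))) \<cdot> zeta_flat (fo RB (fo NB (fo D b)))
      = zeta_flat (fo RB (fo NA (fo RA (fo NB b)))) \<cdot> fa NB (fa D (fa RB (zeta_flat b)))"
    using zeta_flat_nat[of "fa RB (zeta_flat b)"] b by simp
  have y4: "fa NB (etaB (fo D (fo RB (fo NA (fo RA (fo NB b)))))) \<cdot> fa NB (fa D (fa RB (zeta_flat b)))
      = fa NB (fa RB (fa NB (fa D (fa RB (zeta_flat b))))) \<cdot> fa NB (etaB (fo D (fo RB (fo NB (fo D b)))))"
    using arg_cong[OF etaB.nat[of "fa D (fa RB (zeta_flat b))"], of "fa NB"] b by simp
  have y5: "fa NB (etaB (fo D (fo RB (fo NB (fo D b))))) \<cdot> fa NB (fa D (etaB (fo D b)))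
      = fa NB (fa RB (fa NB (fa D (etaB (fo D b))))) \<cdot> fa NB (etaB (fo D (fo D b)))"
    using arg_cong[OF etaB.nat[of "fa D (etaB (fo D b))"], of "fa NB"] b by simp
  have y6: "fa NB (etaB (fo D (fo D b))) \<cdot> fa NB (Delta b) = fa NB (fa RB (fa NB (Delta b))) \<cdot> fa NB (etaB (fo D b))"
    using arg_cong[OF etaB.nat[of "Delta b"], of "fa NB"] b by simp
  show ?thesis using b unfolding tau_sharp_def tau_sharp_twice_def
    by (simp add: zeta_flat_comult[OF b] y1 T.rewrite_in_chain[OF y1] y2 T.rewrite_in_chain[OF y2]
        y3 T.rewrite_in_chain[OF y3]
        zeta_flat_inv_left T.rewrite_in_chain[OF zeta_flat_inv_left[of "fo RB (fo NA (fo RA (fo NB b)))"]]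
        y4 T.rewrite_in_chain[OF y4] y5 T.rewrite_in_chain[OF y5] y6 T.rewrite_in_chain[OF y6])
qed

lemma tau_sharp_coassoc:
  assumes b: "b \<in> cobj B"
  shows "fa NB (fa RB (fa NA (fa RA (tau_sharp b)))) \<cdot> (fa NB (fa RB (fa NA (etaA (fo RA (fo NB b))))) \<cdot> tau_sharp b)
    = tau_sharp (fo RB (fo NA (fo RA (fo NB b)))) \<cdot> (fa NA (fa RA (tau_sharp b)) \<cdot> fa NA (etaA (fo RA (fo NB b))))"
  by (rule T.iso_cancel_right[OF zeta_flat_iso[OF b]])
    (use tau_sharp_coassoc_left[OF b] tau_sharp_coassoc_right[OF b] b in simp_all)

text \<open>Third pre-torsor axiom: \<open>(R\<^sub>AN\<^sub>BR\<^sub>BN\<^sub>A\<tau>) \<circ> \<tau> = (\<tau>R\<^sub>BN\<^sub>AR\<^sub>AN\<^sub>B) \<circ> \<tau>\<close>; after writing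
  \<open>\<tau>\<close> as a transpose, both sides are \<open>R\<^sub>A\<close> of the two sides of \<open>tau_sharp_coassoc\<close>,
  followed by \<open>\<eta>\<^sup>A\<close>.\<close>
lemma tau_coassoc:
  assumes b: "b \<in> cobj B"
  shows "fa RA (fa NB (fa RB (fa NA (tau b)))) \<cdot>\<^sub>A tau b = tau (fo RB (fo NA (fo RA (fo NB b)))) \<cdot>\<^sub>A tau b"
proof -
  let ?x = "fo RA (fo NB b)"
  have z1: "etaA (fo RA (fo NB (fo RB (fo NA ?x)))) \<cdot>\<^sub>A fa RA (fa NB (fa RB (zeta_flat b)))
      = fa RA (fa NA (fa RA (fa NB (fa RB (zeta_flat b))))) \<cdot>\<^sub>A etaA (fo RA (fo NB (fo RB (fo NB (fo D b)))))"
    using etaA.nat[of "fa RA (fa NB (fa RB (zeta_flat b)))"] b by simp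
  have z2: "etaA (fo RA (fo NB (fo RB (fo NB (fo D b))))) \<cdot>\<^sub>A fa RA (fa NB (etaB (fo D b)))
      = fa RA (fa NA (fa RA (fa NB (etaB (fo D b))))) \<cdot>\<^sub>A etaA (fo RA (fo NB (fo D b)))"
    using etaA.nat[of "fa RA (fa NB (etaB (fo D b)))"] b by simp
  have z3: "etaA (fo RA (fo NB (fo D b))) \<cdot>\<^sub>A fa RA (zeta_flat_inv b)
      = fa RA (fa NA (fa RA (zeta_flat_inv b))) \<cdot>\<^sub>A etaA (fo RA (fo NA ?x))"
    using etaA.nat[of "fa RA (zeta_flat_inv b)"] b by simp
  have z4: "etaA (fo RA (fo NA ?x)) \<cdot>\<^sub>A etaA ?x = fa RA (fa NA (etaA ?x)) \<cdot>\<^sub>A etaA ?x"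
    using etaA.nat[of "etaA ?x"] b by simp
  have "fa RA (fa NB (fa RB (fa NA (tau b)))) \<cdot>\<^sub>A tau b
      = fa RA (fa NB (fa RB (fa NA (fa RA (tau_sharp b)))) \<cdot> (fa NB (fa RB (fa NA (etaA ?x))) \<cdot> tau_sharp b))
          \<cdot>\<^sub>A etaA ?x"
    using b by (simp add: tau_def tau_sharp_def)
  also have "\<dots> = fa RA (tau_sharp (fo RB (fo NA ?x)) \<cdot> (fa NA (fa RA (tau_sharp b)) \<cdot> fa NA (etaA ?x)))
          \<cdot>\<^sub>A etaA ?x"
    using tau_sharp_coassoc[OF b] by simp
  also have "\<dots> = tau (fo RB (fo NA ?x)) \<cdot>\<^sub>A tau b"
    using b by (simp add: tau_def tau_sharp_def z1 A.rewrite_in_chain[OF z1] z2 A.rewrite_in_chain[OF z2]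
        z3 A.rewrite_in_chain[OF z3] z4 A.rewrite_in_chain[OF z4])
  finally show ?thesis .
qed

end

locale rarr_morphism_data =
  X: rarr_object_data A B T NA RA etaA epsA NB RB etaB epsB D Delta eps zeta +
  Y: rarr_object_data A B T' NA' RA' etaA' epsA' NB' RB' etaB' epsB' D' Delta' eps' zeta'
  for A :: "('oa,'aa) cat" and B :: "('ob,'ab) cat" and T :: "('ot,'at) cat"
    and NA RA etaA epsA NB RB etaB epsB D Delta eps zeta
    and T' :: "('ot2,'at2) cat" and NA' RA' etaA' epsA' NB' RB' etaB' epsB' D' Delta' eps' zeta' +
  fixes F :: "('ot2,'at2,'ot,'at) ftor" and t
  assumes F_functor: "is_functor T' T F"
    and RA_F_obj [simp]: "\<And>y. y \<in> cobj T' \<Longrightarrow> fo RA (fo F y) = fo RA' y"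
    and RB_F_obj [simp]: "\<And>y. y \<in> cobj T' \<Longrightarrow> fo RB (fo F y) = fo RB' y"
    and RA_F_arr [simp]: "\<And>f. f \<in> carr T' \<Longrightarrow> fa RA (fa F f) = fa RA' f"
    and RB_F_arr [simp]: "\<And>f. f \<in> carr T' \<Longrightarrow> fa RB (fa F f) = fa RB' f"
    and t_comonad_mor: "is_comonad_mor B D Delta eps D' Delta' eps' t"
    and zeta_t_compat: "\<And>y. y \<in> cobj T' \<Longrightarrow>
      ccomp B (fa RB (ccomp T (epsA (fo F (fo NA' (fo RA' y)))) (fa NA (etaA' (fo RA' y))))) (zeta (fo F y))
        = ccomp B (zeta' y) (t (fo RB' y))"
begin

sublocale F: cat_functor T' T F using F_functor by (simp add: cat_functor_def)
sublocale t: nat_trans B B D D' t using t_comonad_mor by (simp add: is_comonad_mor_def nat_trans_def)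

text \<open>The comparison maps \<open>a : N\<^sub>A \<rightarrow> FN\<^sub>A'\<close> and \<open>b : N\<^sub>B \<rightarrow> FN\<^sub>B'\<close>, mates of identities.\<close>
definition a where "a x = ccomp T (epsA (fo F (fo NA' x))) (fa NA (etaA' x))"
definition b where "b x = ccomp T (epsB (fo F (fo NB' x))) (fa NB (etaB' x))"

lemma a_type [simp]:
  assumes "x \<in> cobj A"
  shows "a x \<in> carr T" "cdom T (a x) = fo NA x" "ccod T (a x) = fo F (fo NA' x)"
  using assms by (simp_all add: a_def)

lemma b_type [simp]:
  assumes "x \<in> cobj B"
  shows "b x \<in> carr T" "cdom T (b x) = fo NB x" "ccod T (b x) = fo F (fo NB' x)"
  using assms by (simp_all add: b_def)

lemma zeta_compat: "y \<in> cobj T' \<Longrightarrow>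
    ccomp B (fa RB (a (fo RA' y))) (zeta (fo F y)) = ccomp B (zeta' y) (t (fo RB' y))"
  using zeta_t_compat by (simp add: a_def)

text \<open>Since \<open>R\<^sub>AF = R\<^sub>A'\<close>, the transposes of \<open>a\<close> and \<open>b\<close> are the units \<open>\<eta>'\<^sup>A\<close>, \<open>\<eta>'\<^sup>B\<close>.\<close>
lemma a_transpose:
  assumes x: "x \<in> cobj A"
  shows "ccomp A (fa RA (a x)) (etaA x) = etaA' x"
proof -
  have h1: "ccomp A (fa RA (fa NA (etaA' x))) (etaA x) = ccomp A (etaA (fo RA' (fo NA' x))) (etaA' x)"
    using X.etaA.nat[of "etaA' x"] x by simp
  have h2: "ccomp A (fa RA (epsA (fo F (fo NA' x)))) (etaA (fo RA' (fo NA' x))) = cid A (fo RA' (fo NA' x))"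
    using X.triangleA[of "fo F (fo NA' x)"] x by simp
  show ?thesis
    using x by (simp add: a_def h1 X.A.rewrite_in_chain[OF h1] h2 X.A.rewrite_in_chain[OF h2])
qed

lemma b_transpose:
  assumes x: "x \<in> cobj B"
  shows "ccomp B (fa RB (b x)) (etaB x) = etaB' x"
proof -
  have h1: "ccomp B (fa RB (fa NB (etaB' x))) (etaB x) = ccomp B (etaB (fo RB' (fo NB' x))) (etaB' x)"
    using X.etaB.nat[of "etaB' x"] x by simp
  have h2: "ccomp B (fa RB (epsB (fo F (fo NB' x)))) (etaB (fo RB' (fo NB' x))) = cid B (fo RB' (fo NB' x))"
    using X.triangleB_right[of "fo F (fo NB' x)"] x by simp
  show ?thesis
    using x by (simp add: b_def h1 X.B.rewrite_in_chain[OF h1] h2 X.B.rewrite_in_chain[OF h2])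
qed

lemma a_nat:
  assumes g: "g \<in> carr A"
  shows "ccomp T (fa F (fa NA' g)) (a (cdom A g)) = ccomp T (a (ccod A g)) (fa NA g)"
proof -
  have h1: "ccomp T (fa F (fa NA' g)) (epsA (fo F (fo NA' (cdom A g))))
      = ccomp T (epsA (fo F (fo NA' (ccod A g)))) (fa NA (fa RA' (fa NA' g)))"
    using X.epsA.nat[of "fa F (fa NA' g)"] g by simp
  have h2: "ccomp T (fa NA (fa RA' (fa NA' g))) (fa NA (etaA' (cdom A g)))
      = ccomp T (fa NA (etaA' (ccod A g))) (fa NA g)"
    using arg_cong[OF Y.etaA.nat[of g], of "fa NA"] g by simp
  show ?thesis
    using g by (simp add: a_def h1 X.T.rewrite_in_chain[OF h1] h2 X.T.rewrite_in_chain[OF h2])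
qed

lemma b_nat:
  assumes g: "g \<in> carr B"
  shows "ccomp T (fa F (fa NB' g)) (b (cdom B g)) = ccomp T (b (ccod B g)) (fa NB g)"
proof -
  have h1: "ccomp T (fa F (fa NB' g)) (epsB (fo F (fo NB' (cdom B g))))
      = ccomp T (epsB (fo F (fo NB' (ccod B g)))) (fa NB (fa RB' (fa NB' g)))"
    using X.epsB.nat[of "fa F (fa NB' g)"] g by simp
  have h2: "ccomp T (fa NB (fa RB' (fa NB' g))) (fa NB (etaB' (cdom B g)))
      = ccomp T (fa NB (etaB' (ccod B g))) (fa NB g)"
    using arg_cong[OF Y.etaB.nat[of g], of "fa NB"] g by simp
  show ?thesis
    using g by (simp add: b_def h1 X.T.rewrite_in_chain[OF h1] h2 X.T.rewrite_in_chain[OF h2])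
qed

lemma b_counit:
  assumes z: "z \<in> cobj T'"
  shows "ccomp T (fa F (epsB' z)) (b (fo RB' z)) = epsB (fo F z)"
proof -
  have h1: "ccomp T (fa F (epsB' z)) (epsB (fo F (fo NB' (fo RB' z))))
      = ccomp T (epsB (fo F z)) (fa NB (fa RB' (epsB' z)))"
    using X.epsB.nat[of "fa F (epsB' z)"] z by simp
  have h2: "ccomp T (fa NB (fa RB' (epsB' z))) (fa NB (etaB' (fo RB' z))) = cid T (fo NB (fo RB' z))"
    using arg_cong[OF Y.triangleB_right[OF z], of "fa NB"] z by simp
  show ?thesis
    using z by (simp add: b_def h1 X.T.rewrite_in_chain[OF h1] h2 X.T.rewrite_in_chain[OF h2])
qed

definition zeta_via_t where
  "zeta_via_t x = ccomp T (fa F (fa NB' (zeta' (fo NB' x))))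
     (ccomp T (fa F (fa NB' (fa D' (etaB' x)))) (ccomp T (fa F (fa NB' (t x))) (b (fo D x))))"

lemma zeta_compat_transported:
  assumes x: "x \<in> cobj B"
  shows "ccomp T (b (fo RB' (fo NA' (fo RA' (fo NB' x)))))
           (ccomp T (fa NB (fa RB (a (fo RA' (fo NB' x)))))
             (ccomp T (fa NB (zeta (fo F (fo NB' x)))) (fa NB (fa D (etaB' x)))))
       = zeta_via_t x"
proof -
  have q1: "ccomp T (fa NB (fa RB (a (fo RA' (fo NB' x))))) (fa NB (zeta (fo F (fo NB' x))))
      = ccomp T (fa NB (zeta' (fo NB' x))) (fa NB (t (fo RB' (fo NB' x))))"
    using arg_cong[OF zeta_compat[of "fo NB' x"], of "fa NB"] x by simp
  have q2: "ccomp T (fa NB (t (fo RB' (fo NB' x)))) (fa NB (fa D (etaB' x)))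
      = ccomp T (fa NB (fa D' (etaB' x))) (fa NB (t x))"
    using arg_cong[OF t.nat[of "etaB' x"], of "fa NB"] x by simp
  have q3: "ccomp T (b (fo RB' (fo NA' (fo RA' (fo NB' x))))) (fa NB (zeta' (fo NB' x)))
      = ccomp T (fa F (fa NB' (zeta' (fo NB' x)))) (b (fo D' (fo RB' (fo NB' x))))"
    using b_nat[of "zeta' (fo NB' x)"] x by simp
  have q4: "ccomp T (b (fo D' (fo RB' (fo NB' x)))) (fa NB (fa D' (etaB' x)))
      = ccomp T (fa F (fa NB' (fa D' (etaB' x)))) (b (fo D' x))"
    using b_nat[of "fa D' (etaB' x)"] x by simp
  have q5: "ccomp T (b (fo D' x)) (fa NB (t x)) = ccomp T (fa F (fa NB' (t x))) (b (fo D x))"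
    using b_nat[of "t x"] x by simp
  show ?thesis
    using x unfolding zeta_via_t_def by (simp add: q1 X.T.rewrite_in_chain[OF q1] q2 X.T.rewrite_in_chain[OF q2]
        q3 X.T.rewrite_in_chain[OF q3] q4 X.T.rewrite_in_chain[OF q4] q5 X.T.rewrite_in_chain[OF q5])
qed

lemma zeta_along_b:
  assumes x: "x \<in> cobj B"
  shows "ccomp T (fa NB (fa RB (fa NA (fa RA (b x)))))
           (ccomp T (fa NB (zeta (fo NB x))) (fa NB (fa D (etaB x))))
       = ccomp T (fa NB (zeta (fo F (fo NB' x)))) (fa NB (fa D (etaB' x)))"
proof -
  have q1: "ccomp T (fa NB (fa RB (fa NA (fa RA (b x))))) (fa NB (zeta (fo NB x)))
      = ccomp T (fa NB (zeta (fo F (fo NB' x)))) (fa NB (fa D (fa RB (b x))))"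
    using arg_cong[OF X.zeta.nat[of "b x"], of "fa NB"] x by simp
  have q2: "ccomp T (fa NB (fa D (fa RB (b x)))) (fa NB (fa D (etaB x))) = fa NB (fa D (etaB' x))"
    using arg_cong[OF b_transpose[OF x], of "\<lambda>h. fa NB (fa D h)"] x by simp
  show ?thesis
    using x by (simp add: q1 X.T.rewrite_in_chain[OF q1] q2)
qed

text \<open>Left side of the pre-torsor-morphism equation before transposition along
  \<open>N\<^sub>A \<turnstile> R\<^sub>A\<close>, precomposed with \<open>\<zeta>\<^sup>\<flat>\<close>.\<close>
lemma tau_sharp_transport_left:
  assumes x: "x \<in> cobj B"
  shows "ccomp T (ccomp T (b (fo RB' (fo NA' (fo RA' (fo NB' x))))) (ccomp T (fa NB (fa RB (a (fo RA' (fo NB' x)))))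
           (ccomp T (fa NB (fa RB (fa NA (fa RA (b x))))) (X.tau_sharp x)))) (X.zeta_flat x)
       = zeta_via_t x"
proof -
  have q1: "ccomp T (fa NB (fa RB (X.zeta_flat x))) (fa NB (etaB (fo D x)))
      = ccomp T (fa NB (zeta (fo NB x))) (fa NB (fa D (etaB x)))"
    using arg_cong[OF X.zeta_flat_transpose[OF x], of "fa NB"] x by simp
  show ?thesis
    using x unfolding X.tau_sharp_def
    by (simp add: X.zeta_flat_inv_left q1 X.T.rewrite_in_chain[OF q1] zeta_along_b
        zeta_compat_transported)
qed

text \<open>Right side of the pre-torsor-morphism equation before transposition, precomposed
  with \<open>\<zeta>\<^sup>\<flat>\<close>: it reduces to the same composite, now using that \<open>b\<close> intertwines the
  counits and that \<open>\<tau>'\<^sup>\<sharp>\<close> is built from \<open>\<zeta>'\<^sup>\<flat>\<close>.\<close>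
lemma tau_sharp_transport_right:
  assumes x: "x \<in> cobj B"
  shows "ccomp T (ccomp T (fa F (Y.tau_sharp x)) (ccomp T (fa F (fa NA' (fa RA (b x)))) (a (fo RA (fo NB x)))))
           (X.zeta_flat x)
       = zeta_via_t x"
proof -
  have r1: "ccomp T (fa F (fa NA' (fa RA (b x)))) (a (fo RA (fo NB x)))
      = ccomp T (a (fo RA' (fo NB' x))) (fa NA (fa RA (b x)))"
    using a_nat[of "fa RA (b x)"] x by simp
  have r2: "ccomp T (fa NA (fa RA (b x))) (epsB (fo NA (fo RA (fo NB x))))
      = ccomp T (epsB (fo NA (fo RA' (fo NB' x)))) (fa NB (fa RB (fa NA (fa RA (b x)))))"
    using X.epsB.nat[of "fa NA (fa RA (b x))"] x by simp
  have r3: "ccomp T (a (fo RA' (fo NB' x))) (epsB (fo NA (fo RA' (fo NB' x))))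
      = ccomp T (epsB (fo F (fo NA' (fo RA' (fo NB' x))))) (fa NB (fa RB (a (fo RA' (fo NB' x)))))"
    using X.epsB.nat[of "a (fo RA' (fo NB' x))"] x by simp
  have r4: "epsB (fo F (fo NA' (fo RA' (fo NB' x))))
      = ccomp T (fa F (epsB' (fo NA' (fo RA' (fo NB' x))))) (b (fo RB' (fo NA' (fo RA' (fo NB' x)))))"
    using b_counit[of "fo NA' (fo RA' (fo NB' x))"] x by simp
  have r5: "ccomp T (fa F (epsB' (fo NA' (fo RA' (fo NB' x)))))
      (ccomp T (fa F (fa NB' (zeta' (fo NB' x)))) (fa F (fa NB' (fa D' (etaB' x))))) = fa F (Y.zeta_flat x)"
    using x by (simp add: Y.zeta_flat_def)
  have r6: "ccomp T (fa F (Y.zeta_flat_inv x)) (fa F (Y.zeta_flat x)) = cid T (fo F (fo NB' (fo D' x)))"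
    using arg_cong[OF Y.zeta_flat_inv_left[OF x], of "fa F"] x by simp
  have r7: "ccomp T (fa F (fa NB' (fa RB' (Y.zeta_flat x)))) (fa F (fa NB' (etaB' (fo D' x))))
      = ccomp T (fa F (fa NB' (zeta' (fo NB' x)))) (fa F (fa NB' (fa D' (etaB' x))))"
    using arg_cong[OF Y.zeta_flat_transpose[OF x], of "\<lambda>h. fa F (fa NB' h)"] x by simp
  show ?thesis
    using x unfolding Y.tau_sharp_def X.zeta_flat_def[of x]
    by (simp add: r1 X.T.rewrite_in_chain[OF r1] r2 X.T.rewrite_in_chain[OF r2]
        zeta_along_b r3 X.T.rewrite_in_chain[OF r3] r4
        zeta_compat_transported[OF x, unfolded zeta_via_t_def] X.T.rewrite_in_chain3[OF r5]
        r6 X.T.rewrite_in_chain[OF r6] r7 X.T.rewrite_in_chain[OF r7] zeta_via_t_def)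
qed

lemma tau_sharp_transport:
  assumes x: "x \<in> cobj B"
  shows "ccomp T (b (fo RB' (fo NA' (fo RA' (fo NB' x))))) (ccomp T (fa NB (fa RB (a (fo RA' (fo NB' x)))))
           (ccomp T (fa NB (fa RB (fa NA (fa RA (b x))))) (X.tau_sharp x)))
       = ccomp T (fa F (Y.tau_sharp x)) (ccomp T (fa F (fa NA' (fa RA (b x)))) (a (fo RA (fo NB x))))"
  by (rule X.T.iso_cancel_right[OF X.zeta_flat_iso[OF x]])
    (use tau_sharp_transport_left[OF x] tau_sharp_transport_right[OF x] x in simp_all)

text \<open>The pre-torsor-morphism equation \<open>(R\<^sub>AbR\<^sub>BaR\<^sub>Ab) \<circ> \<tau> = \<tau>' \<circ> R\<^sub>Ab\<close>: transpose
  \<open>tau_sharp_transport\<close>, using \<open>R\<^sub>Aa \<circ> \<eta>\<^sup>A = \<eta>'\<^sup>A\<close>.\<close>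
lemma pretorsor_mor_equation:
  assumes x: "x \<in> cobj B"
  shows "ccomp A (ccomp A (fa RA (b (fo RB' (fo NA' (fo RA' (fo NB' x))))))
            (ccomp A (fa RA (fa NB (fa RB (a (fo RA' (fo NB' x))))))
              (fa RA (fa NB (fa RB (fa NA (fa RA (b x))))))))
          (X.tau x)
        = ccomp A (Y.tau x) (fa RA (b x))"
proof -
  have s1: "ccomp A (etaA' (fo RA' (fo NB' x))) (fa RA (b x))
      = ccomp A (fa RA' (fa NA' (fa RA (b x)))) (etaA' (fo RA (fo NB x)))"
    using Y.etaA.nat[of "fa RA (b x)"] x by simp
  have s2: "etaA' (fo RA (fo NB x)) = ccomp A (fa RA (a (fo RA (fo NB x)))) (etaA (fo RA (fo NB x)))"
    using a_transpose[of "fo RA (fo NB x)"] x by simp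
  have "ccomp A (ccomp A (fa RA (b (fo RB' (fo NA' (fo RA' (fo NB' x))))))
            (ccomp A (fa RA (fa NB (fa RB (a (fo RA' (fo NB' x))))))
              (fa RA (fa NB (fa RB (fa NA (fa RA (b x))))))))
          (X.tau x)
      = ccomp A (fa RA (ccomp T (b (fo RB' (fo NA' (fo RA' (fo NB' x)))))
          (ccomp T (fa NB (fa RB (a (fo RA' (fo NB' x)))))
            (ccomp T (fa NB (fa RB (fa NA (fa RA (b x))))) (X.tau_sharp x)))))
          (etaA (fo RA (fo NB x)))"
    using x by (simp add: X.tau_def X.tau_sharp_def)
  also have "\<dots> = ccomp A (fa RA (ccomp T (fa F (Y.tau_sharp x))
          (ccomp T (fa F (fa NA' (fa RA (b x)))) (a (fo RA (fo NB x))))))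
          (etaA (fo RA (fo NB x)))"
    by (simp only: tau_sharp_transport[OF x])
  also have "\<dots> = ccomp A (Y.tau x) (fa RA (b x))"
    using x by (simp add: Y.tau_def Y.tau_sharp_def s1 X.A.rewrite_in_chain[OF s1] s2)
  finally show ?thesis .
qed

end

lemma rarr_obj_locale:
  assumes obj: "rarr_obj A B X"
  shows "rarr_object_data A B (rT X) (rNA X) (rRA X) (rEtaA X) (rEpsA X) (rNB X) (rRB X)
           (rEtaB X) (rEpsB X) (rD X) (rDelta X) (rEps X) (rZeta X)"
proof -
  interpret comonad_arrow_data A B "rT X" "rNA X" "rRA X" "rEtaA X" "rEpsA X" "rNB X" "rRB X"
      "rEtaB X" "rEpsB X" "rD X" "rDelta X" "rEps X" "rZeta X"
    using obj unfolding rarr_obj_def comonad_arrow_def Let_def comonad_arrow_data_def by auto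
  have "zbar X b = zeta_flat b" for b by (simp add: zbar_def zeta_flat_def)
  then show ?thesis
    by unfold_locales (use obj in \<open>auto simp: rarr_obj_def\<close>)
qed

theorem rarr_obj_pre_torsor:
  assumes obj: "rarr_obj A B X"
  shows "pre_torsor A B X (tau_of A X)"
proof -
  interpret rarr_object_data A B "rT X" "rNA X" "rRA X" "rEtaA X" "rEpsA X" "rNB X" "rRB X"
      "rEtaB X" "rEpsB X" "rD X" "rDelta X" "rEps X" "rZeta X"
    by (rule rarr_obj_locale[OF obj])
  have tau_eq: "tau_of A X = tau"
    by (rule ext) (simp add: tau_of_def tau_def zeta_flat_inv_def zbar_def zeta_flat_def Let_def)
  show ?thesis
    unfolding pre_torsor_def Let_def tau_eq
    using adjA adjB tau_is_nt tau_counit_A tau_counit_B tau_coassoc by blast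
qed

theorem rarr_mor_pretorsor_mor:
  assumes mor: "rarr_mor A B X X' F t"
  shows "pretorsor_mor A B X (tau_of A X) X' (tau_of A X') F"
proof -
  have obj: "rarr_obj A B X" "rarr_obj A B X'" and compat: "compatible_functor X X' F"
    using mor by (auto simp: rarr_mor_def)
  interpret rarr_morphism_data A B "rT X" "rNA X" "rRA X" "rEtaA X" "rEpsA X" "rNB X" "rRB X"
      "rEtaB X" "rEpsB X" "rD X" "rDelta X" "rEps X" "rZeta X"
      "rT X'" "rNA X'" "rRA X'" "rEtaA X'" "rEpsA X'" "rNB X'" "rRB X'"
      "rEtaB X'" "rEpsB X'" "rD X'" "rDelta X'" "rEps X'" "rZeta X'" F t
    using mor rarr_obj_locale[OF obj(1)] rarr_obj_locale[OF obj(2)]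
    by (intro rarr_morphism_data.intro rarr_morphism_data_axioms.intro)
      (auto simp: rarr_mor_def compatible_functor_def a_of_def)
  have tau_eq: "tau_of A X = X.tau" "tau_of A X' = Y.tau"
    by (rule ext, simp add: tau_of_def X.tau_def X.zeta_flat_inv_def zbar_def X.zeta_flat_def Let_def)
      (rule ext, simp add: tau_of_def Y.tau_def Y.zeta_flat_inv_def zbar_def Y.zeta_flat_def Let_def)
  have mates_eq: "a_of X X' F = a" "b_of X X' F = b"
    by (auto simp: a_of_def b_of_def a_def b_def)
  show ?thesis
    unfolding pretorsor_mor_def Let_def tau_eq mates_eq
    using compat pretorsor_mor_equation by simp
qed

theorem mainTheorem8:
  fixes A :: "('oa,'aa) cat" and B :: "('ob,'ab) cat"
    and X :: "('oa,'aa,'ob,'ab,'ot,'at) rarr"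
    and X' :: "('oa,'aa,'ob,'ab,'ot2,'at2) rarr"
    and F :: "('ot2,'at2,'ot,'at) ftor" and t :: "'ob \<Rightarrow> 'ab"
  shows "(rarr_obj A B X \<longrightarrow> pre_torsor A B X (tau_of A X)) \<and>
         (rarr_mor A B X X' F t \<longrightarrow>
            pretorsor_mor A B X (tau_of A X) X' (tau_of A X') F)"
  using rarr_obj_pre_torsor rarr_mor_pretorsor_mor by blast

end
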